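(* Let $Q=[0,1]^3$ and for a finite set $Y\subseteq Q$ let $E(Y)=\int_Q\operatorname{dist}^2(x,Y)\,dx=\sum_{y\in Y}\int_{V_y}|x-y|^2dx$, where $V_y=\{x\in Q:|x-y|\le|x-z|\ \forall z\in Y\}$ is the Voronoi cell of $y$. For each $n$ let $Y_n$ be a minimizer of $E$ among sets of $n$ points in $Q$. Let $\Omega\subseteq Q$ be an arbitrary cube with positive volume. Then for all sufficiently large $n$: (1) the contribution to the energy, $\sum\int_{V_y}|x-y|^2dx$, of the Voronoi cells $V_y$ ($y\in Y_n$) intersecting $\partial\Omega$ is of order $O(n^{-1})$; (2) the contribution to the energy of the Voronoi cells contained in $\Omega$ and not intersecting $\partial\Omega$ is of order $O(n^{-2/3})$. Consequently, the energy contribution of the Voronoi cells intersecting $\partial\Omega$ is negligible compared to the energy contribution of the Voronoi cells in $\Omega$ not intersecting $\partial\Omega$. *)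

theory Defs
  imports "HOL-Analysis.Analysis" "HOL-Library.Landau_Symbols"
begin

type_synonym pt = "real ^ 3"

definition Qcube :: "pt set" where
  "Qcube = cbox 0 One"

definition energy :: "pt set \<Rightarrow> real" where
  "energy Y = integral Qcube (\<lambda>x. (infdist x Y)\<^sup>2)"

definition voronoi :: "pt set \<Rightarrow> pt \<Rightarrow> pt set" where
  "voronoi Y y = {x \<in> Qcube. \<forall>z\<in>Y. dist x y \<le> dist x z}"

definition cell_energy :: "pt set \<Rightarrow> pt \<Rightarrow> real" where
  "cell_energy Y y = integral (voronoi Y y) (\<lambda>x. (dist x y)\<^sup>2)"

definition is_minimizer :: "nat \<Rightarrow> pt set \<Rightarrow> bool" where
  "is_minimizer n Y \<longleftrightarrow> finite Y \<and> card Y = n \<and> Y \<subseteq> Qcube \<and>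
     (\<forall>Z. finite Z \<and> card Z = n \<and> Z \<subseteq> Qcube \<longrightarrow> energy Y \<le> energy Z)"

definition is_cube :: "pt set \<Rightarrow> bool" where
  "is_cube \<Omega> \<longleftrightarrow> (\<exists>a s. s > 0 \<and> \<Omega> = cbox a (a + s *\<^sub>R One))"

definition boundary_energy :: "pt set \<Rightarrow> pt set \<Rightarrow> real" where
  "boundary_energy \<Omega> Y = (\<Sum>y\<in>{y\<in>Y. voronoi Y y \<inter> frontier \<Omega> \<noteq> {}}. cell_energy Y y)"

definition interior_energy :: "pt set \<Rightarrow> pt set \<Rightarrow> real" where
  "interior_energy \<Omega> Y = (\<Sum>y\<in>{y\<in>Y. voronoi Y y \<subseteq> \<Omega> \<and> voronoi Y y \<inter> frontier \<Omega> = {}}. cell_energy Y y)"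

end

theory Submission
  imports Defs "HOL-Real_Asymp.Real_Asymp"
begin

text \<open>
  The heart of the matter is that an optimal configuration \<open>Y\<close> of \<open>n\<close> points has covering
  radius \<open>\<rho> = O(n^(-1/3))\<close>. Let \<open>x0\<close> be a point of the cube farthest from \<open>Y\<close>. By
  averaging, at least \<open>n/2\<close> cells have volume at most \<open>2/n\<close>, and by pigeonhole two of their
  centres \<open>y1, y2\<close> are at distance \<open>d = O(n^(-1/3))\<close>. Moving \<open>y1\<close> to \<open>x0\<close> costs at most
  \<open>(2 d \<rho> + d\<^sup>2) 2/n\<close> on the cell of \<open>y1\<close> and gains at least a constant times \<open>\<rho>^5\<close> near
  \<open>x0\<close>; optimality forces \<open>\<rho> n^(1/3) \<le> 24\<close>.

  A cell has diameter at most \<open>2\<rho>\<close>, so the cells meeting the boundary of \<open>\<Omega>\<close> lie in six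
  slabs of width \<open>4\<rho>\<close> and carry energy \<open>O(\<rho>^3) = O(1/n)\<close>. The cells inside \<open>\<Omega>\<close> carry
  energy at most \<open>\<rho>\<^sup>2\<close>; conversely they cover the concentric cube shrunk by \<open>3\<rho>\<close>, on which
  \<open>dist\<^sup>2(x, Y) \<ge> r\<^sup>2\<close> off \<open>n\<close> cubes of side \<open>2r\<close>. Taking \<open>r\<close> a small multiple of
  \<open>n^(-1/3)\<close> gives the matching lower bound of order \<open>n^(-2/3)\<close>.
\<close>

(* the simp normal form of One $ i *)
lemma sum_Basis_nth [simp]: "(\<Sum>x\<in>Basis. x $ i) = (1 :: real)"
  by (simp add: sum_component[symmetric] Cart_1[symmetric])

lemma mem_cube_iff:
  fixes a x :: "real ^ 'n"
  shows "x \<in> cbox a (a + s *\<^sub>R One) \<longleftrightarrow> (\<forall>i. a$i \<le> x$i \<and> x$i \<le> a$i + s)"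
  by (simp add: mem_box_cart)

lemma measure_cube:
  fixes a :: pt
  assumes "0 \<le> s"
  shows "measure lebesgue (cbox a (a + s *\<^sub>R One)) = s ^ 3"
proof -
  have "a \<in> cbox a (a + s *\<^sub>R One)" using assms by (simp add: mem_cube_iff)
  then have "cbox a (a + s *\<^sub>R One) \<noteq> {}" by blast
  then show ?thesis by (simp add: measure_completion content_cbox_cart)
qed

lemma abs_component_le_dist: "\<bar>x$i - y$i\<bar> \<le> dist x (y :: real ^ 'n)"
  by (metis dist_norm vector_minus_component component_le_norm_cart)

lemma dist_le_components:
  fixes x y :: "real ^ 'n"
    and s :: real
  assumes "\<And>i. \<bar>x$i - y$i\<bar> \<le> s"
  shows "dist x y \<le> real CARD('n) * s"
proof -
  have "dist x y \<le> (\<Sum>i\<in>UNIV. \<bar>x$i - y$i\<bar>)"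
    using norm_le_l1_cart[of "x - y"] by (simp add: dist_norm)
  also have "\<dots> \<le> (\<Sum>i\<in>(UNIV::'n set). s)" by (intro sum_mono assms)
  finally show ?thesis by simp
qed

lemma mem_Qcube_iff: "x \<in> Qcube \<longleftrightarrow> (\<forall>i. 0 \<le> x$i \<and> x$i \<le> 1)"
  unfolding Qcube_def by (simp add: mem_box_cart)

lemma dist_Qcube_le:
  assumes "x \<in> Qcube" "y \<in> Qcube"
  shows "dist x y \<le> 3"
proof -
  have "\<bar>x$i - y$i\<bar> \<le> 1" for i
    using assms unfolding mem_Qcube_iff by (simp add: abs_le_iff) (metis add_increasing2 diff_le_eq)
  then show ?thesis using dist_le_components[of x y 1] by simp
qed

lemma measure_Qcube: "measure lebesgue Qcube = 1"
  using measure_cube[of 1 0] by (simp add: Qcube_def)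

lemma lmeasurable_subset_Qcube: "S \<in> sets lebesgue \<Longrightarrow> S \<subseteq> Qcube \<Longrightarrow> S \<in> lmeasurable"
  by (metis Qcube_def bounded_cbox bounded_set_imp_lmeasurable bounded_subset)

lemma integrable_on_subset_Qcube:
  fixes f :: "pt \<Rightarrow> real"
  assumes "continuous_on Qcube f" "S \<in> sets lebesgue" "S \<subseteq> Qcube"
  shows "f integrable_on S"
proof -
  have "f absolutely_integrable_on Qcube"
    using assms(1) unfolding Qcube_def by (simp add: absolutely_integrable_continuous)
  then have "f absolutely_integrable_on S"
    using set_integrable_subset assms(2,3) by blast
  then show ?thesis using set_lebesgue_integral_eq_integral(1) by blast
qed

lemma integral_const_lmeasurable:
  "S \<in> lmeasurable \<Longrightarrow> integral S (\<lambda>x. c) = c * measure lebesgue S"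
  using integral_mult_right[of S c "\<lambda>x. 1 :: real"] by (simp add: lmeasure_integral)

lemma integral_le_measure:
  fixes f :: "'a :: euclidean_space \<Rightarrow> real"
  assumes "S \<in> lmeasurable" "f integrable_on S" "\<And>x. x \<in> S \<Longrightarrow> f x \<le> c"
  shows "integral S f \<le> c * measure lebesgue S"
proof -
  have "integral S f \<le> integral S (\<lambda>x. c)"
    using assms by (intro integral_le integrable_on_const) auto
  then show ?thesis using integral_const_lmeasurable[OF assms(1)] by simp
qed

lemma measure_le_integral:
  fixes f :: "'a :: euclidean_space \<Rightarrow> real"
  assumes "S \<in> lmeasurable" "f integrable_on S" "\<And>x. x \<in> S \<Longrightarrow> c \<le> f x"
  shows "c * measure lebesgue S \<le> integral S f"
proof -
  have "integral S (\<lambda>x. c) \<le> integral S f"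
    using assms by (intro integral_le integrable_on_const) auto
  then show ?thesis using integral_const_lmeasurable[OF assms(1)] by simp
qed

lemma integral_Qcube_indicator:
  assumes "S \<in> lmeasurable" "S \<subseteq> Qcube"
  shows "(\<lambda>x. if x \<in> S then c else 0) integrable_on Qcube"
    and "integral Qcube (\<lambda>x. if x \<in> S then c else 0) = c * measure lebesgue S"
  using assms integrable_on_const[OF assms(1)] integral_const_lmeasurable[OF assms(1)]
  by (simp_all add: integrable_restrict_Int integral_restrict_Int Int_absorb2)

lemma continuous_on_infdist_sq: "continuous_on A (\<lambda>x. (infdist x Y)\<^sup>2)"
  by (intro continuous_intros continuous_on_infdist)

lemma integrable_infdist_sq_Qcube: "(\<lambda>x. (infdist x Y)\<^sup>2) integrable_on Qcube"
  unfolding Qcube_def by (rule integrable_continuous[OF continuous_on_infdist_sq])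

section \<open>Voronoi cells\<close>

lemma voronoi_subset_Qcube: "voronoi Y y \<subseteq> Qcube"
  unfolding voronoi_def by auto

lemma closed_voronoi: "closed (voronoi Y y)"
proof -
  have "voronoi Y y = Qcube \<inter> (\<Inter>z\<in>Y. {x. dist x y \<le> dist x z})"
    unfolding voronoi_def by auto
  moreover have "closed {x. dist x y \<le> dist x z}" for z
    by (intro closed_Collect_le continuous_intros)
  ultimately show ?thesis
    unfolding Qcube_def by (auto intro!: closed_Int closed_INT)
qed

lemma lmeasurable_voronoi: "voronoi Y y \<in> lmeasurable"
  using closed_voronoi voronoi_subset_Qcube by (simp add: lmeasurable_subset_Qcube)

lemma nearest_point_exists:
  fixes Y :: "pt set"
  assumes "finite Y" "Y \<noteq> {}"
  obtains y where "y \<in> Y" "infdist x Y = dist x y"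
  using infdist_attains_inf[of Y x] assms finite_imp_closed by blast

lemma mem_voronoi_if_nearest:
  assumes "x \<in> Qcube" "infdist x Y = dist x y"
  shows "x \<in> voronoi Y y"
  unfolding voronoi_def using assms infdist_le[of _ Y x] by simp

lemma infdist_eq_dist_voronoi:
  assumes "finite Y" "y \<in> Y" "x \<in> voronoi Y y"
  shows "infdist x Y = dist x y"
proof -
  obtain w where "w \<in> Y" "infdist x Y = dist x w"
    using nearest_point_exists assms(1,2) by blast
  moreover have "dist x y \<le> dist x w" using assms(3) \<open>w \<in> Y\<close> unfolding voronoi_def by auto
  ultimately show ?thesis using infdist_le[OF assms(2), of x] by linarith
qed

lemma Union_voronoi:
  assumes "finite Y" "Y \<noteq> {}"
  shows "(\<Union>y\<in>Y. voronoi Y y) = Qcube"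
proof
  show "Qcube \<subseteq> (\<Union>y\<in>Y. voronoi Y y)"
  proof
    fix x assume "x \<in> Qcube"
    obtain y where "y \<in> Y" "infdist x Y = dist x y" using nearest_point_exists[OF assms] .
    then show "x \<in> (\<Union>y\<in>Y. voronoi Y y)" using mem_voronoi_if_nearest \<open>x \<in> Qcube\<close> by blast
  qed
qed (use voronoi_subset_Qcube in blast)

lemma dist_voronoi_le:
  assumes "finite Y" "y \<in> Y" "\<forall>x\<in>Qcube. infdist x Y \<le> \<rho>"
    and "x \<in> voronoi Y y" "x' \<in> voronoi Y y"
  shows "dist x x' \<le> 2 * \<rho>"
proof -
  have "dist z y \<le> \<rho>" if "z \<in> voronoi Y y" for z
  proof -
    have "z \<in> Qcube" using that voronoi_subset_Qcube by blast
    then show ?thesis using assms(3) infdist_eq_dist_voronoi[OF assms(1,2) that] by auto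
  qed
  then have "dist x y \<le> \<rho>" "dist x' y \<le> \<rho>" using assms(4,5) by auto
  then show ?thesis using dist_triangle2[of x x' y] by linarith
qed

text \<open>Two distinct cells meet only on the bisecting hyperplane of their centres.\<close>
lemma negligible_voronoi_Int:
  assumes "y \<noteq> z" "y \<in> Y" "z \<in> Y"
  shows "negligible (voronoi Y y \<inter> voronoi Y z)"
proof -
  have "voronoi Y y \<inter> voronoi Y z \<subseteq> {x. (2 *\<^sub>R (z - y)) \<bullet> x = z \<bullet> z - y \<bullet> y}"
  proof
    fix x assume "x \<in> voronoi Y y \<inter> voronoi Y z"
    then have "dist x y = dist x z" using assms unfolding voronoi_def by (auto intro: antisym)
    then have "(x - y) \<bullet> (x - y) = (x - z) \<bullet> (x - z)"
      by (simp add: dist_norm flip: power2_norm_eq_inner)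
    then show "x \<in> {x. (2 *\<^sub>R (z - y)) \<bullet> x = z \<bullet> z - y \<bullet> y}"
      by (simp add: inner_diff_left inner_diff_right inner_commute algebra_simps)
  qed
  moreover have "2 *\<^sub>R (z - y) \<noteq> 0" using assms by simp
  ultimately show ?thesis using negligible_subset[OF negligible_hyperplane] by blast
qed

lemma has_integral_Union_voronoi:
  fixes f :: "pt \<Rightarrow> real"
  assumes "finite Y" "S \<subseteq> Y" "continuous_on Qcube f"
  shows "(f has_integral (\<Sum>y\<in>S. integral (voronoi Y y) f)) (\<Union>y\<in>S. voronoi Y y)"
proof (rule has_integral_UN)
  show "finite S" using assms finite_subset by blast
  show "(f has_integral integral (voronoi Y y) f) (voronoi Y y)" for y
    using integrable_on_subset_Qcube[OF assms(3) _ voronoi_subset_Qcube] closed_voronoi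
    by (simp add: integrable_integral)
  show "pairwise (\<lambda>y z. negligible (voronoi Y y \<inter> voronoi Y z)) S"
    unfolding pairwise_def using negligible_voronoi_Int assms(2) by blast
qed

lemma sum_measure_voronoi:
  assumes "finite Y" "Y \<noteq> {}"
  shows "(\<Sum>y\<in>Y. measure lebesgue (voronoi Y y)) = 1"
proof -
  have "((\<lambda>x. 1) has_integral (\<Sum>y\<in>Y. measure lebesgue (voronoi Y y))) Qcube"
    using has_integral_Union_voronoi[of Y Y "\<lambda>x. 1"] Union_voronoi[OF assms]
    by (simp add: assms lmeasure_integral lmeasurable_voronoi)
  moreover have "((\<lambda>x. 1 :: real) has_integral 1) Qcube"
    using has_integral_const[of "1::real" 0 One] measure_Qcube
    by (simp add: Qcube_def measure_completion del: has_integral_const)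
  ultimately show ?thesis by (rule has_integral_unique)
qed

lemma sum_cell_energy:
  assumes "finite Y" "S \<subseteq> Y"
  shows "(\<Sum>y\<in>S. cell_energy Y y) = integral (\<Union>y\<in>S. voronoi Y y) (\<lambda>x. (infdist x Y)\<^sup>2)"
proof -
  have "cell_energy Y y = integral (voronoi Y y) (\<lambda>x. (infdist x Y)\<^sup>2)" if "y \<in> S" for y
    unfolding cell_energy_def using infdist_eq_dist_voronoi assms that by (intro integral_cong) auto
  then show ?thesis
    using integral_unique[OF has_integral_Union_voronoi[OF assms continuous_on_infdist_sq]] by simp
qed

lemma sum_cell_energy_le:
  assumes "finite Y" "S \<subseteq> Y" "\<forall>x\<in>Qcube. infdist x Y \<le> \<rho>"
  shows "(\<Sum>y\<in>S. cell_energy Y y) \<le> \<rho>\<^sup>2 * measure lebesgue (\<Union>y\<in>S. voronoi Y y)"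
proof -
  let ?W = "\<Union>y\<in>S. voronoi Y y"
  have "finite S" using assms finite_subset by blast
  then have "closed ?W" using closed_voronoi by blast
  moreover have W: "?W \<subseteq> Qcube" using voronoi_subset_Qcube by blast
  ultimately have "?W \<in> lmeasurable" by (simp add: lmeasurable_subset_Qcube)
  moreover have "(\<lambda>x. (infdist x Y)\<^sup>2) integrable_on ?W"
    using integrable_on_subset_Qcube[OF continuous_on_infdist_sq _ W] \<open>closed ?W\<close> by simp
  moreover have "(infdist x Y)\<^sup>2 \<le> \<rho>\<^sup>2" if "x \<in> ?W" for x
    using assms(3) W that by (intro power_mono infdist_nonneg) auto
  ultimately show ?thesis
    unfolding sum_cell_energy[OF assms(1,2)] by (rule integral_le_measure)
qed

lemma cell_energy_nonneg: "0 \<le> cell_energy Y y"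
proof -
  have "(\<lambda>x. (dist x y)\<^sup>2) integrable_on voronoi Y y"
    using closed_voronoi by (intro integrable_on_subset_Qcube voronoi_subset_Qcube continuous_intros) auto
  then show ?thesis unfolding cell_energy_def by (rule integral_nonneg) simp
qed

section \<open>The covering radius of an optimal configuration\<close>

lemma grid_index_bounds:
  fixes t :: real and k :: nat
  assumes "1 \<le> k" "0 \<le> t" "t \<le> 1"
  defines "c \<equiv> min (k - 1) (nat \<lfloor>k * t\<rfloor>)"
  shows "real c \<le> k * t" "k * t \<le> real c + 1"
proof -
  have "k * t \<le> k" using assms(3) by (simp add: mult_left_le)
  have "real c \<le> k * t \<and> k * t \<le> real c + 1"
  proof (cases "nat \<lfloor>k * t\<rfloor> \<le> k - 1")
    case True
    then have "real c = of_int \<lfloor>k * t\<rfloor>" using assms(2) by (simp add: c_def)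
    then show ?thesis by linarith
  next
    case False
    then have "int k \<le> \<lfloor>k * t\<rfloor>" using assms(1) by linarith
    then have "real k \<le> k * t" by (simp add: le_floor_iff)
    moreover have "real c = real k - 1" using False assms(1) by (simp add: c_def of_nat_diff)
    ultimately show ?thesis using \<open>k * t \<le> k\<close> by linarith
  qed
  then show "real c \<le> k * t" "k * t \<le> real c + 1" by auto
qed

lemma exists_close_pair:
  fixes S :: "pt set" and k :: nat
  assumes "finite S" "S \<subseteq> Qcube" "1 \<le> k" "k ^ 3 < card S"
  obtains y1 y2 where "y1 \<in> S" "y2 \<in> S" "y1 \<noteq> y2" "dist y1 y2 \<le> 3 / k"
proof -
  define c :: "real \<Rightarrow> nat" where "c t = min (k - 1) (nat \<lfloor>real k * t\<rfloor>)" for t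
  define box_index where "box_index y = (\<lambda>i::3. c (y $ i))" for y :: pt
  have "box_index ` S \<subseteq> UNIV \<rightarrow>\<^sub>E {..<k}"
    using assms(3) unfolding box_index_def c_def by auto
  moreover have "finite (UNIV \<rightarrow>\<^sub>E {..<k} :: (3 \<Rightarrow> nat) set)" by (simp add: finite_PiE)
  moreover have "card (UNIV \<rightarrow>\<^sub>E {..<k} :: (3 \<Rightarrow> nat) set) = k ^ 3" by (simp add: card_PiE)
  ultimately have "card (box_index ` S) \<le> k ^ 3" using card_mono by metis
  have "\<not> inj_on box_index S"
  proof
    assume "inj_on box_index S"
    then have "card (box_index ` S) = card S" by (rule card_image)
    then show False using \<open>card (box_index ` S) \<le> k ^ 3\<close> assms(4) by linarith
  qed
  then obtain y1 y2 where y: "y1 \<in> S" "y2 \<in> S" "y1 \<noteq> y2" "box_index y1 = box_index y2"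
    unfolding inj_on_def by blast
  have grid: "real (c t) \<le> k * t \<and> k * t \<le> real (c t) + 1" if "0 \<le> t" "t \<le> 1" for t :: real
    using grid_index_bounds[OF assms(3) that] unfolding c_def by simp
  have "\<bar>y1$i - y2$i\<bar> \<le> 1 / k" for i
  proof -
    have "y1 \<in> Qcube" "y2 \<in> Qcube" using y(1,2) assms(2) by auto
    then have "real (c (y1$i)) \<le> k * y1$i \<and> k * y1$i \<le> real (c (y1$i)) + 1"
      "real (c (y2$i)) \<le> k * y2$i \<and> k * y2$i \<le> real (c (y2$i)) + 1"
      by (simp_all add: grid mem_Qcube_iff)
    moreover have "c (y1$i) = c (y2$i)" using fun_cong[OF y(4), of i] unfolding box_index_def by simp
    ultimately have "\<bar>k * y1$i - k * y2$i\<bar> \<le> 1" unfolding abs_le_iff by linarith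
    then have "k * \<bar>y1$i - y2$i\<bar> \<le> 1" by (simp add: abs_mult flip: right_diff_distrib)
    then show ?thesis using assms(3) by (simp add: field_simps)
  qed
  then have "dist y1 y2 \<le> 3 / k" using dist_le_components[of y1 y2 "1 / k"] by simp
  then show ?thesis using that y by blast
qed

lemma card_small_cells:
  assumes "finite Y" "card Y = n" "0 < n"
  shows "real n \<le> 2 * card {y \<in> Y. measure lebesgue (voronoi Y y) \<le> 2 / n}"
proof -
  define S where "S = {y \<in> Y. measure lebesgue (voronoi Y y) \<le> 2 / n}"
  have "Y \<noteq> {}" using assms by auto
  have "real (card (Y - S)) * (2 / n) = (\<Sum>y\<in>Y - S. 2 / n)" by simp
  also have "\<dots> \<le> (\<Sum>y\<in>Y - S. measure lebesgue (voronoi Y y))"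
    by (rule sum_mono) (auto simp: S_def)
  also have "\<dots> \<le> (\<Sum>y\<in>Y. measure lebesgue (voronoi Y y))"
    using assms(1) by (intro sum_mono2) auto
  also have "\<dots> = 1" using sum_measure_voronoi[OF assms(1) \<open>Y \<noteq> {}\<close>] .
  finally have "real (card (Y - S)) \<le> real n / 2" using assms(3) by (simp add: field_simps)
  moreover have "card S + card (Y - S) = n"
    using assms(1,2) card_Diff_subset[of S Y] card_mono[of Y S] by (simp add: S_def)
  ultimately show ?thesis unfolding S_def[symmetric] by linarith
qed

lemma exists_small_cell_close_pair:
  assumes "finite Y" "Y \<subseteq> Qcube" "card Y = n" "64 \<le> n"
  obtains y1 y2 where "y1 \<in> Y" "y2 \<in> Y" "y1 \<noteq> y2"
    "measure lebesgue (voronoi Y y1) \<le> 2 / n" "dist y1 y2 * n powr (1/3) \<le> 12"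
proof -
  define S where "S = {y \<in> Y. measure lebesgue (voronoi Y y) \<le> 2 / n}"
  have card_S: "real n \<le> 2 * card S"
    unfolding S_def using card_small_cells[OF assms(1,3)] assms(4) by simp
  define h where "h = real n powr (1/3)"
  have "0 < h" using assms(4) by (simp add: h_def)
  have h3: "h ^ 3 = n" using assms(4) by (simp add: h_def powr_power)
  have "4 \<le> h"
  proof (rule ccontr)
    assume "\<not> 4 \<le> h"
    then have "h ^ 3 < 4 ^ 3" using \<open>0 < h\<close> by (intro power_strict_mono) auto
    then show False using h3 assms(4) by simp
  qed
  define k where "k = nat \<lfloor>h / 2\<rfloor>"
  have "real k = of_int \<lfloor>h / 2\<rfloor>" using \<open>4 \<le> h\<close> by (simp add: k_def)
  then have "h / 4 \<le> k" "k \<le> h / 2"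
    using \<open>4 \<le> h\<close> of_int_floor_le[of "h / 2"] real_of_int_floor_add_one_gt[of "h / 2"] by linarith+
  then have "1 \<le> k" using \<open>4 \<le> h\<close> by linarith
  have "real (k ^ 3) \<le> (h / 2) ^ 3" using \<open>k \<le> h / 2\<close> by (simp add: power_mono)
  also have "\<dots> < real (card S)" using h3 card_S assms(4) by (simp add: power_divide)
  finally have "k ^ 3 < card S" by linarith
  moreover have "finite S" "S \<subseteq> Qcube" using assms(1,2) by (auto simp: S_def)
  ultimately obtain y1 y2 where y: "y1 \<in> S" "y2 \<in> S" "y1 \<noteq> y2" "dist y1 y2 \<le> 3 / k"
    using exists_close_pair \<open>1 \<le> k\<close> by metis
  have "dist y1 y2 * h \<le> 3 / k * h" using y(4) \<open>0 < h\<close> by (intro mult_right_mono) auto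
  also have "\<dots> \<le> 12" using \<open>h / 4 \<le> k\<close> \<open>1 \<le> k\<close> by (simp add: field_simps)
  finally show ?thesis using that y unfolding S_def h_def by blast
qed

lemma exists_cube_near_point:
  assumes "x0 \<in> Qcube" "0 \<le> s" "s \<le> 1/2"
  obtains a where "cbox a (a + s *\<^sub>R One) \<subseteq> Qcube"
    "\<And>x. x \<in> cbox a (a + s *\<^sub>R One) \<Longrightarrow> dist x x0 \<le> 3 * s"
proof -
  define a :: pt where "a = (\<chi> i. if x0$i \<le> 1/2 then x0$i else x0$i - s)"
  have "0 \<le> x$i \<and> x$i \<le> 1 \<and> \<bar>x$i - x0$i\<bar> \<le> s"
    if "x \<in> cbox a (a + s *\<^sub>R One)" for x i
  proof -
    have "0 \<le> x0$i" "x0$i \<le> 1" using assms(1) by (auto simp: mem_Qcube_iff)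
    moreover have "a$i \<le> x$i" "x$i \<le> a$i + s" using that by (auto simp: mem_cube_iff)
    ultimately show ?thesis using assms(2,3) unfolding a_def by (cases "x0$i \<le> 1/2") auto
  qed
  note bounds = this
  show ?thesis
  proof (rule that)
    show "cbox a (a + s *\<^sub>R One) \<subseteq> Qcube" using bounds by (auto simp: mem_Qcube_iff)
    show "dist x x0 \<le> 3 * s" if "x \<in> cbox a (a + s *\<^sub>R One)" for x
      using dist_le_components[of x x0 s] bounds[OF that] by simp
  qed
qed

lemma energy_remove_point_le:
  assumes "finite Y" "y1 \<in> Y" "y2 \<in> Y" "y1 \<noteq> y2"
    and "\<And>x. x \<in> voronoi Y y1 \<Longrightarrow> dist x y1 \<le> \<rho>"
  defines "d \<equiv> dist y1 y2"
  shows "energy (Y - {y1}) \<le> energy Y + (2 * d * \<rho> + d\<^sup>2) * measure lebesgue (voronoi Y y1)"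
proof -
  define c where "c = 2 * d * \<rho> + d\<^sup>2"
  have pointwise: "(infdist x (Y - {y1}))\<^sup>2 \<le> (infdist x Y)\<^sup>2 + (if x \<in> voronoi Y y1 then c else 0)"
    if "x \<in> Qcube" for x
  proof (cases "x \<in> voronoi Y y1")
    case True
    have "infdist x (Y - {y1}) \<le> dist x y2" using assms(3,4) by (intro infdist_le) auto
    also have "\<dots> \<le> dist x y1 + d" unfolding d_def by (rule dist_triangle)
    finally have "(infdist x (Y - {y1}))\<^sup>2 \<le> (dist x y1 + d)\<^sup>2"
      by (intro power_mono infdist_nonneg)
    also have "\<dots> = (dist x y1)\<^sup>2 + 2 * d * dist x y1 + d\<^sup>2" by algebra
    also have "\<dots> \<le> (dist x y1)\<^sup>2 + c"
      using assms(5)[OF True] by (simp add: c_def d_def mult_left_mono)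
    finally show ?thesis using True infdist_eq_dist_voronoi[OF assms(1,2) True] by simp
  next
    case False
    obtain w where w: "w \<in> Y" "infdist x Y = dist x w"
      using nearest_point_exists assms(1,2) by blast
    have "w \<noteq> y1" using False mem_voronoi_if_nearest[OF that w(2)] by blast
    then have "infdist x (Y - {y1}) \<le> infdist x Y" using w by (simp add: infdist_le)
    then show ?thesis using False by (simp add: power_mono infdist_nonneg)
  qed
  have integrable: "(\<lambda>x. if x \<in> voronoi Y y1 then c else 0) integrable_on Qcube"
    "integral Qcube (\<lambda>x. if x \<in> voronoi Y y1 then c else 0) = c * measure lebesgue (voronoi Y y1)"
    using integral_Qcube_indicator[OF lmeasurable_voronoi voronoi_subset_Qcube] by auto
  have "energy (Y - {y1})
      \<le> integral Qcube (\<lambda>x. (infdist x Y)\<^sup>2 + (if x \<in> voronoi Y y1 then c else 0))"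
    unfolding energy_def using pointwise integrable
    by (intro integral_le integrable_add integrable_infdist_sq_Qcube) auto
  also have "\<dots> = energy Y + c * measure lebesgue (voronoi Y y1)"
    unfolding energy_def using integrable by (simp add: integral_add integrable_infdist_sq_Qcube)
  finally show ?thesis unfolding c_def .
qed

lemma energy_insert_point_le:
  assumes "finite Z" "Z \<noteq> {}" "x0 \<in> Qcube" "0 < \<rho>" "\<rho> \<le> 6" "\<rho> \<le> infdist x0 Z"
  shows "energy (insert x0 Z) + \<rho> ^ 5 / 3456 \<le> energy Z"
proof -
  define s where "s = \<rho> / 12"
  obtain a where "cbox a (a + s *\<^sub>R One) \<subseteq> Qcube"
    and near: "\<And>x. x \<in> cbox a (a + s *\<^sub>R One) \<Longrightarrow> dist x x0 \<le> 3 * s"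
    using exists_cube_near_point[OF assms(3), of s] assms(4,5) by (auto simp: s_def)
  define C where "C = cbox a (a + s *\<^sub>R One)"
  have "C \<subseteq> Qcube" "C \<in> lmeasurable" using \<open>cbox a _ \<subseteq> Qcube\<close> by (simp_all add: C_def)
  text \<open>Near \<open>x0\<close> the new point is at distance at most \<open>\<rho>/4\<close>, the old ones at least \<open>3\<rho>/4\<close>.\<close>
  have pointwise: "(infdist x (insert x0 Z))\<^sup>2 \<le> (infdist x Z)\<^sup>2 - (if x \<in> C then \<rho>\<^sup>2 / 2 else 0)"
    for x
  proof (cases "x \<in> C")
    case True
    then have "dist x x0 \<le> \<rho> / 4" using near by (simp add: C_def s_def)
    then have "infdist x (insert x0 Z) \<le> \<rho> / 4" using infdist_le[of x0 "insert x0 Z" x] by simp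
    then have "(infdist x (insert x0 Z))\<^sup>2 \<le> (\<rho> / 4)\<^sup>2" by (intro power_mono infdist_nonneg)
    moreover have "3 * \<rho> / 4 \<le> infdist x Z"
      using infdist_triangle[of x0 Z x] assms(6) \<open>dist x x0 \<le> \<rho> / 4\<close> by (simp add: dist_commute)
    then have "(3 * \<rho> / 4)\<^sup>2 \<le> (infdist x Z)\<^sup>2" using assms(4) by (intro power_mono) auto
    ultimately show ?thesis using True by (simp add: power_divide)
  next
    case False
    have "infdist x (insert x0 Z) \<le> infdist x Z" using assms(2) by (intro infdist_mono) auto
    then show ?thesis using False by (simp add: power_mono infdist_nonneg)
  qed
  have "energy (insert x0 Z) \<le> integral Qcube (\<lambda>x. (infdist x Z)\<^sup>2 - (if x \<in> C then \<rho>\<^sup>2 / 2 else 0))"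
    unfolding energy_def using pointwise integral_Qcube_indicator(1)[OF \<open>C \<in> lmeasurable\<close> \<open>C \<subseteq> Qcube\<close>]
    by (intro integral_le integrable_diff integrable_infdist_sq_Qcube) auto
  also have "\<dots> = energy Z - \<rho>\<^sup>2 / 2 * measure lebesgue C"
    using integral_Qcube_indicator[OF \<open>C \<in> lmeasurable\<close> \<open>C \<subseteq> Qcube\<close>, of "\<rho>\<^sup>2 / 2"]
    by (simp add: energy_def integral_diff integrable_infdist_sq_Qcube)
  also have "measure lebesgue C = s ^ 3"
    using measure_cube[of s a] assms(4) unfolding C_def s_def by simp
  also have "\<rho>\<^sup>2 / 2 * s ^ 3 = \<rho> ^ 5 / 3456" by (simp add: s_def power_divide eval_nat_numeral)
  finally show ?thesis by simp
qed

lemma covering_radius_arith: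
  fixes \<rho> d h :: real
  assumes "0 < \<rho>" "0 < h" "0 \<le> d" "d * h \<le> 12"
    and "\<rho> ^ 5 / 3456 \<le> (2 * d * \<rho> + d\<^sup>2) * (2 / h ^ 3)"
  shows "\<rho> * h \<le> 24"
proof (rule ccontr)
  define t e where "t = \<rho> * h" and "e = d * h"
  assume "\<not> \<rho> * h \<le> 24"
  then have "24 < t" by (simp add: t_def)
  have "t ^ 5 = \<rho> ^ 5 * h ^ 5" by (simp add: t_def power_mult_distrib)
  also have "\<dots> \<le> 3456 * ((2 * d * \<rho> + d\<^sup>2) * (2 / h ^ 3)) * h ^ 5"
    using assms(2,5) by (intro mult_right_mono) auto
  also have "\<dots> = 6912 * (2 * e * t + e\<^sup>2)"
    using assms(2) by (simp add: t_def e_def field_simps eval_nat_numeral)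
  also have "\<dots> \<le> 6912 * (48 * t)"
  proof -
    have "0 \<le> e" "e \<le> 12" using assms(2,3,4) by (simp_all add: e_def)
    then have "2 * e * t \<le> 24 * t" "e\<^sup>2 \<le> 144"
      using \<open>24 < t\<close> power_mono[of e 12 2] by (simp_all add: mult_right_mono)
    then have "2 * e * t + e\<^sup>2 \<le> 48 * t" using \<open>24 < t\<close> by linarith
    then show ?thesis by simp
  qed
  finally have "t * t ^ 4 \<le> t * 24 ^ 4" by (simp add: eval_nat_numeral)
  then have "t ^ 4 \<le> 24 ^ 4" using \<open>24 < t\<close> by simp
  moreover have "24 ^ 4 < t ^ 4" using \<open>24 < t\<close> by (intro power_strict_mono) auto
  ultimately show False by simp
qed

text \<open>Optimality of \<open>Y\<close> against the configuration in which \<open>y1\<close> is moved to the farthest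
  point \<open>x0\<close>.\<close>
lemma minimizer_moved_point_ineq:
  assumes "is_minimizer n Y" "x0 \<in> Qcube" "\<forall>x\<in>Qcube. infdist x Y \<le> infdist x0 Y"
    and "0 < infdist x0 Y" "y1 \<in> Y" "y2 \<in> Y" "y1 \<noteq> y2"
  defines "\<rho> \<equiv> infdist x0 Y" and "d \<equiv> dist y1 y2"
  shows "\<rho> ^ 5 / 3456 \<le> (2 * d * \<rho> + d\<^sup>2) * measure lebesgue (voronoi Y y1)"
proof -
  have fin: "finite Y" and card: "card Y = n" and "Y \<subseteq> Qcube"
    and minimal: "\<And>Z. finite Z \<Longrightarrow> card Z = n \<Longrightarrow> Z \<subseteq> Qcube \<Longrightarrow> energy Y \<le> energy Z"
    using assms(1) unfolding is_minimizer_def by auto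
  define Z where "Z = Y - {y1}"
  have "0 < \<rho>" using assms(4) by (simp add: \<rho>_def)
  have "x0 \<notin> Y" using assms(4) by auto
  have "Z \<noteq> {}" "finite Z" using assms(5-7) fin by (auto simp: Z_def)
  have "\<rho> \<le> 6"
    using infdist_le[OF assms(5), of x0] dist_Qcube_le[OF assms(2), of y1] assms(5) \<open>Y \<subseteq> Qcube\<close>
    by (auto simp: \<rho>_def)
  have "\<rho> \<le> infdist x0 Z" unfolding \<rho>_def using \<open>Z \<noteq> {}\<close> by (intro infdist_mono) (auto simp: Z_def)
  have "0 < n" using card fin assms(5) card_gt_0_iff by blast
  then have "card (insert x0 Z) = n" using card fin assms(5) \<open>x0 \<notin> Y\<close> by (simp add: Z_def)
  then have "energy Y \<le> energy (insert x0 Z)"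
    using \<open>finite Z\<close> \<open>Y \<subseteq> Qcube\<close> assms(2) by (intro minimal) (auto simp: Z_def)
  also have "\<dots> \<le> energy Z - \<rho> ^ 5 / 3456"
    using energy_insert_point_le[OF \<open>finite Z\<close> \<open>Z \<noteq> {}\<close> assms(2) \<open>0 < \<rho>\<close> \<open>\<rho> \<le> 6\<close> \<open>\<rho> \<le> infdist x0 Z\<close>]
    by simp
  also have "energy Z \<le> energy Y + (2 * d * \<rho> + d\<^sup>2) * measure lebesgue (voronoi Y y1)"
    unfolding Z_def d_def
  proof (rule energy_remove_point_le[OF fin assms(5-7)])
    show "dist x y1 \<le> \<rho>" if "x \<in> voronoi Y y1" for x
    proof -
      have "x \<in> Qcube" using that voronoi_subset_Qcube by blast
      then have "infdist x Y \<le> \<rho>" using assms(3) by (simp add: \<rho>_def)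
      then show ?thesis using infdist_eq_dist_voronoi[OF fin assms(5) that] by simp
    qed
  qed
  finally show ?thesis by simp
qed

lemma minimizer_farthest_point_bound:
  assumes "is_minimizer n Y" "64 \<le> n" "x0 \<in> Qcube" "\<forall>x\<in>Qcube. infdist x Y \<le> infdist x0 Y"
  shows "infdist x0 Y * n powr (1/3) \<le> 24"
proof (cases "infdist x0 Y = 0")
  case False
  then have "0 < infdist x0 Y" using infdist_nonneg[of x0 Y] by linarith
  have "finite Y" "card Y = n" "Y \<subseteq> Qcube" using assms(1) by (auto simp: is_minimizer_def)
  define h where "h = real n powr (1/3)"
  have "0 < h" using assms(2) by (simp add: h_def)
  have h3: "h ^ 3 = n" using assms(2) by (simp add: h_def powr_power)
  obtain y1 y2 where y: "y1 \<in> Y" "y2 \<in> Y" "y1 \<noteq> y2"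
    and small: "measure lebesgue (voronoi Y y1) \<le> 2 / n" and "dist y1 y2 * n powr (1/3) \<le> 12"
    using exists_small_cell_close_pair[OF \<open>finite Y\<close> \<open>Y \<subseteq> Qcube\<close> \<open>card Y = n\<close> assms(2)] .
  then have close: "dist y1 y2 * h \<le> 12" by (simp add: h_def)
  let ?d = "dist y1 y2" and ?\<rho> = "infdist x0 Y"
  have "?\<rho> ^ 5 / 3456 \<le> (2 * ?d * ?\<rho> + ?d\<^sup>2) * measure lebesgue (voronoi Y y1)"
    using minimizer_moved_point_ineq[OF assms(1,3,4) \<open>0 < ?\<rho>\<close> y] .
  also have "\<dots> \<le> (2 * ?d * ?\<rho> + ?d\<^sup>2) * (2 / h ^ 3)"
    using small h3 \<open>0 < ?\<rho>\<close> by (intro mult_left_mono) simp_all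
  finally have "?\<rho> * h \<le> 24"
    by (rule covering_radius_arith[OF \<open>0 < ?\<rho>\<close> \<open>0 < h\<close> zero_le_dist close])
  then show ?thesis unfolding h_def .
qed simp

lemma minimizer_covering_radius:
  assumes "is_minimizer n Y" "64 \<le> n" "x \<in> Qcube"
  shows "infdist x Y \<le> 24 / n powr (1/3)"
proof -
  have "\<exists>x0\<in>Qcube. \<forall>x\<in>Qcube. infdist x Y \<le> infdist x0 Y"
    using assms(3) unfolding Qcube_def
    by (intro continuous_attains_sup) (auto intro: continuous_on_infdist continuous_on_id)
  then obtain x0 where x0: "x0 \<in> Qcube" "\<forall>x\<in>Qcube. infdist x Y \<le> infdist x0 Y" by blast
  have "infdist x0 Y \<le> 24 / n powr (1/3)"
    using minimizer_farthest_point_bound[OF assms(1,2) x0] assms(2) by (simp add: field_simps)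
  then show ?thesis using x0(2) assms(3) by fastforce
qed

section \<open>Cells meeting the boundary of a cube\<close>

lemma frontier_cbox_face:
  fixes a b p :: "real ^ 'n"
  assumes "p \<in> frontier (cbox a b)"
  obtains i where "p$i = a$i \<or> p$i = b$i"
proof -
  have "p \<in> cbox a b" "p \<notin> box a b" using assms by (simp_all add: frontier_cbox)
  then obtain i where "a$i \<le> p$i" "p$i \<le> b$i" "\<not> (a$i < p$i \<and> p$i < b$i)"
    unfolding mem_box_cart by blast
  then have "p$i = a$i \<or> p$i = b$i" by linarith
  then show ?thesis by (rule that)
qed

lemma closed_slab: "closed {x \<in> Qcube. \<bar>x$i - c\<bar> \<le> r}"
proof -
  have "closed {x :: pt. \<bar>x$i - c\<bar> \<le> r}" by (intro closed_Collect_le continuous_intros)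
  then have "closed (Qcube \<inter> {x. \<bar>x$i - c\<bar> \<le> r})" unfolding Qcube_def by (intro closed_Int) auto
  then show ?thesis by (simp add: Int_def)
qed

lemma slab_lmeasurable: "{x \<in> Qcube. \<bar>x$i - c\<bar> \<le> r} \<in> lmeasurable"
  using closed_slab by (intro lmeasurable_subset_Qcube) auto

lemma measure_slab_le:
  fixes i :: 3
  assumes "0 \<le> r"
  shows "measure lebesgue {x \<in> Qcube. \<bar>x$i - c\<bar> \<le> r} \<le> 2 * r"
proof -
  define lo :: pt where "lo = (\<chi> j. if j = i then c - r else 0)"
  define hi :: pt where "hi = (\<chi> j. if j = i then c + r else 1)"
  have "{x \<in> Qcube. \<bar>x$i - c\<bar> \<le> r} \<subseteq> cbox lo hi"
    by (auto simp: mem_Qcube_iff mem_box_cart lo_def hi_def abs_le_iff)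
  then have "measure lebesgue {x \<in> Qcube. \<bar>x$i - c\<bar> \<le> r} \<le> measure lebesgue (cbox lo hi)"
    using slab_lmeasurable by (intro measure_mono_fmeasurable) auto
  also have "\<dots> = (\<Prod>j\<in>UNIV. hi$j - lo$j)"
  proof -
    have "lo \<in> cbox lo hi" using assms by (auto simp: mem_box_cart lo_def hi_def)
    then have "cbox lo hi \<noteq> {}" by blast
    then show ?thesis by (simp add: measure_completion content_cbox_cart)
  qed
  also have "\<dots> = (\<Prod>j\<in>UNIV. if j = i then 2 * r else 1)"
    by (intro prod.cong) (auto simp: lo_def hi_def)
  also have "\<dots> = 2 * r" by (simp add: prod.delta)
  finally show ?thesis .
qed

lemma boundary_cells_subset_slabs:
  assumes "finite Y" "\<forall>x\<in>Qcube. infdist x Y \<le> \<rho>"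
  shows "(\<Union>y\<in>{y \<in> Y. voronoi Y y \<inter> frontier (cbox a b) \<noteq> {}}. voronoi Y y)
    \<subseteq> (\<Union>i. {x \<in> Qcube. \<bar>x$i - a$i\<bar> \<le> 2 * \<rho>} \<union> {x \<in> Qcube. \<bar>x$i - b$i\<bar> \<le> 2 * \<rho>})"
proof
  fix x assume "x \<in> (\<Union>y\<in>{y \<in> Y. voronoi Y y \<inter> frontier (cbox a b) \<noteq> {}}. voronoi Y y)"
  then obtain y p where y: "y \<in> Y" "x \<in> voronoi Y y" "p \<in> voronoi Y y" "p \<in> frontier (cbox a b)"
    by auto
  obtain i where "p$i = a$i \<or> p$i = b$i" using frontier_cbox_face[OF y(4)] .
  moreover have "\<bar>x$i - p$i\<bar> \<le> 2 * \<rho>"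
    using abs_component_le_dist[of x i p] dist_voronoi_le[OF assms(1) y(1) assms(2) y(2,3)] by linarith
  moreover have "x \<in> Qcube" using y(2) voronoi_subset_Qcube by blast
  ultimately show "x \<in> (\<Union>i. {x \<in> Qcube. \<bar>x$i - a$i\<bar> \<le> 2 * \<rho>} \<union> {x \<in> Qcube. \<bar>x$i - b$i\<bar> \<le> 2 * \<rho>})"
    by auto
qed

lemma measure_slabs_le:
  fixes a b :: pt
  assumes "0 \<le> r"
  defines "S \<equiv> (\<Union>i. {x \<in> Qcube. \<bar>x$i - a$i\<bar> \<le> r} \<union> {x \<in> Qcube. \<bar>x$i - b$i\<bar> \<le> r})"
  shows "S \<in> lmeasurable" and "measure lebesgue S \<le> 12 * r"
proof -
  have "closed S" unfolding S_def by (auto intro!: closed_UN closed_Un closed_slab)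
  then show "S \<in> lmeasurable" by (intro lmeasurable_subset_Qcube) (auto simp: S_def)
  have "measure lebesgue S \<le>
      (\<Sum>i\<in>UNIV. measure lebesgue ({x \<in> Qcube. \<bar>x$i - a$i\<bar> \<le> r} \<union> {x \<in> Qcube. \<bar>x$i - b$i\<bar> \<le> r}))"
    unfolding S_def using slab_lmeasurable by (intro measure_UNION_le) auto
  also have "\<dots> \<le> (\<Sum>i\<in>(UNIV :: 3 set). 2 * r + 2 * r)"
  proof (intro sum_mono)
    fix i :: 3
    have "measure lebesgue ({x \<in> Qcube. \<bar>x$i - a$i\<bar> \<le> r} \<union> {x \<in> Qcube. \<bar>x$i - b$i\<bar> \<le> r})
        \<le> measure lebesgue {x \<in> Qcube. \<bar>x$i - a$i\<bar> \<le> r} + measure lebesgue {x \<in> Qcube. \<bar>x$i - b$i\<bar> \<le> r}"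
      using slab_lmeasurable by (intro measure_Un_le) auto
    also have "\<dots> \<le> 2 * r + 2 * r" using measure_slab_le[OF assms(1)] by (intro add_mono)
    finally show "measure lebesgue ({x \<in> Qcube. \<bar>x$i - a$i\<bar> \<le> r} \<union> {x \<in> Qcube. \<bar>x$i - b$i\<bar> \<le> r})
        \<le> 2 * r + 2 * r" .
  qed
  finally show "measure lebesgue S \<le> 12 * r" by simp
qed

lemma boundary_energy_le:
  assumes "finite Y" "0 \<le> \<rho>" "\<forall>x\<in>Qcube. infdist x Y \<le> \<rho>"
  shows "boundary_energy (cbox a b) Y \<le> 24 * \<rho> ^ 3"
proof -
  define B where "B = {y \<in> Y. voronoi Y y \<inter> frontier (cbox a b) \<noteq> {}}"
  have "closed (\<Union>y\<in>B. voronoi Y y)"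
    using assms(1) closed_voronoi by (intro closed_UN) (auto simp: B_def)
  let ?S = "\<Union>i. {x \<in> Qcube. \<bar>x$i - a$i\<bar> \<le> 2 * \<rho>} \<union> {x \<in> Qcube. \<bar>x$i - b$i\<bar> \<le> 2 * \<rho>}"
  have "measure lebesgue (\<Union>y\<in>B. voronoi Y y) \<le> measure lebesgue ?S"
  proof (rule measure_mono_fmeasurable)
    show "(\<Union>y\<in>B. voronoi Y y) \<subseteq> ?S"
      using boundary_cells_subset_slabs[OF assms(1,3)] by (simp add: B_def)
    show "(\<Union>y\<in>B. voronoi Y y) \<in> sets lebesgue" using \<open>closed (\<Union>y\<in>B. voronoi Y y)\<close> by simp
    show "?S \<in> fmeasurable lebesgue" using measure_slabs_le(1)[of "2 * \<rho>"] assms(2) by simp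
  qed
  also have "\<dots> \<le> 12 * (2 * \<rho>)" using measure_slabs_le(2)[of "2 * \<rho>"] assms(2) by simp
  finally have "\<rho>\<^sup>2 * measure lebesgue (\<Union>y\<in>B. voronoi Y y) \<le> \<rho>\<^sup>2 * (24 * \<rho>)"
    by (intro mult_left_mono) auto
  moreover have "boundary_energy (cbox a b) Y \<le> \<rho>\<^sup>2 * measure lebesgue (\<Union>y\<in>B. voronoi Y y)"
    unfolding boundary_energy_def B_def[symmetric] using assms(1,3)
    by (intro sum_cell_energy_le) (auto simp: B_def)
  ultimately show ?thesis by (simp add: power2_eq_square power3_eq_cube)
qed

section \<open>Cells inside a cube\<close>

lemma interior_energy_le:
  assumes "finite Y" "\<forall>x\<in>Qcube. infdist x Y \<le> \<rho>"
  shows "interior_energy \<Omega> Y \<le> \<rho>\<^sup>2"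
proof -
  define I where "I = {y \<in> Y. voronoi Y y \<subseteq> \<Omega> \<and> voronoi Y y \<inter> frontier \<Omega> = {}}"
  have "closed (\<Union>y\<in>I. voronoi Y y)"
    using assms(1) closed_voronoi by (intro closed_UN) (auto simp: I_def)
  then have "measure lebesgue (\<Union>y\<in>I. voronoi Y y) \<le> measure lebesgue Qcube"
    using voronoi_subset_Qcube by (intro measure_mono_fmeasurable) (auto simp: Qcube_def)
  then have "\<rho>\<^sup>2 * measure lebesgue (\<Union>y\<in>I. voronoi Y y) \<le> \<rho>\<^sup>2"
    using measure_Qcube mult_left_mono[of _ 1 "\<rho>\<^sup>2"] by simp
  moreover have "interior_energy \<Omega> Y \<le> \<rho>\<^sup>2 * measure lebesgue (\<Union>y\<in>I. voronoi Y y)"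
    unfolding interior_energy_def I_def[symmetric] using assms by (intro sum_cell_energy_le) (auto simp: I_def)
  ultimately show ?thesis by linarith
qed

text \<open>Off the cubes of side \<open>2r\<close> centred at the points of \<open>Y\<close>, the squared distance to \<open>Y\<close>
  is at least \<open>r\<^sup>2\<close>.\<close>
lemma integral_infdist_sq_ge:
  fixes r :: real
  assumes "finite Y" "Y \<noteq> {}" "A \<in> sets lebesgue" "A \<subseteq> Qcube" "0 \<le> r"
  shows "r\<^sup>2 * (measure lebesgue A - card Y * (2 * r) ^ 3) \<le> integral A (\<lambda>x. (infdist x Y)\<^sup>2)"
proof -
  define cube where "cube y = cbox (y - r *\<^sub>R One) (y - r *\<^sub>R One + (2 * r) *\<^sub>R One)" for y :: pt
  define U where "U = (\<Union>y\<in>Y. cube y)"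
  have U: "U \<in> lmeasurable" unfolding U_def cube_def using assms(1) by (intro fmeasurable.finite_UN) auto
  have A: "A \<in> lmeasurable" using assms(3,4) by (rule lmeasurable_subset_Qcube)
  have "A - U \<in> lmeasurable" using A U by auto
  have far: "r\<^sup>2 \<le> (infdist x Y)\<^sup>2" if "x \<in> A - U" for x
  proof -
    obtain w where w: "w \<in> Y" "infdist x Y = dist x w" using nearest_point_exists[OF assms(1,2)] .
    then have "x \<notin> cube w" using that by (auto simp: U_def)
    then have "\<not> (\<forall>i. \<bar>x$i - w$i\<bar> \<le> r)"
      unfolding cube_def mem_cube_iff by (auto simp: abs_le_iff algebra_simps)
    then obtain i where "r < \<bar>x$i - w$i\<bar>" by (auto simp: not_le)
    then have "r \<le> infdist x Y" using abs_component_le_dist[of x i w] w(2) by linarith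
    then show ?thesis using assms(5) by (intro power_mono)
  qed
  have "measure lebesgue U \<le> (\<Sum>y\<in>Y. measure lebesgue (cube y))"
    unfolding U_def cube_def using assms(1) by (intro measure_UNION_le) auto
  also have "\<dots> = card Y * (2 * r) ^ 3"
    using measure_cube[of "2 * r"] assms(5) by (simp add: cube_def)
  finally have "r\<^sup>2 * (measure lebesgue A - card Y * (2 * r) ^ 3) \<le> r\<^sup>2 * measure lebesgue (A - U)"
    using measure_diff_le_measure_setdiff[OF A U] by (intro mult_left_mono) auto
  also have "\<dots> \<le> integral (A - U) (\<lambda>x. (infdist x Y)\<^sup>2)"
    using \<open>A - U \<in> lmeasurable\<close> far assms(4)
    by (intro measure_le_integral integrable_on_subset_Qcube[OF continuous_on_infdist_sq]) auto
  also have "\<dots> \<le> integral A (\<lambda>x. (infdist x Y)\<^sup>2)"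
    using \<open>A - U \<in> lmeasurable\<close> assms(3,4)
    by (intro integral_subset_le integrable_on_subset_Qcube[OF continuous_on_infdist_sq]) auto
  finally show ?thesis .
qed

lemma inner_cube_subset_interior_cells:
  assumes "finite Y" "Y \<noteq> {}" "0 < \<rho>" "\<forall>x\<in>Qcube. infdist x Y \<le> \<rho>"
    and "\<Omega> = cbox a (a + s *\<^sub>R One)" "\<Omega> \<subseteq> Qcube"
  shows "cbox (a + (3 * \<rho>) *\<^sub>R One) (a + (3 * \<rho>) *\<^sub>R One + (s - 6 * \<rho>) *\<^sub>R One)
    \<subseteq> (\<Union>y\<in>{y \<in> Y. voronoi Y y \<subseteq> \<Omega> \<and> voronoi Y y \<inter> frontier \<Omega> = {}}. voronoi Y y)"
proof
  fix x assume "x \<in> cbox (a + (3 * \<rho>) *\<^sub>R One) (a + (3 * \<rho>) *\<^sub>R One + (s - 6 * \<rho>) *\<^sub>R One)"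
  then have x: "a$i + 3 * \<rho> \<le> x$i \<and> x$i \<le> a$i + s - 3 * \<rho>" for i
    by (auto simp: mem_cube_iff)
  then have "a$i \<le> x$i \<and> x$i \<le> a$i + s" for i using assms(3) by (smt (verit))
  then have "x \<in> \<Omega>" unfolding assms(5) mem_cube_iff by blast
  then have "x \<in> Qcube" using assms(6) by blast
  obtain y where y: "y \<in> Y" "infdist x Y = dist x y" using nearest_point_exists[OF assms(1,2)] .
  have "x \<in> voronoi Y y" using mem_voronoi_if_nearest[OF \<open>x \<in> Qcube\<close> y(2)] .
  have "voronoi Y y \<subseteq> box a (a + s *\<^sub>R One)"
  proof
    fix w assume "w \<in> voronoi Y y"
    then have "\<bar>w$i - x$i\<bar> \<le> 2 * \<rho>" for i
      using abs_component_le_dist[of w i x] dist_voronoi_le[OF assms(1) y(1) assms(4)]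
        \<open>x \<in> voronoi Y y\<close> by fastforce
    then have "a$i < w$i \<and> w$i < a$i + s" for i using x[of i] assms(3) by (smt (verit))
    then show "w \<in> box a (a + s *\<^sub>R One)" by (simp add: mem_box_cart)
  qed
  then have "voronoi Y y \<subseteq> \<Omega>" "voronoi Y y \<inter> frontier \<Omega> = {}"
    using box_subset_cbox[of a "a + s *\<^sub>R One"] assms(5) by (auto simp: frontier_cbox)
  then show "x \<in> (\<Union>y\<in>{y \<in> Y. voronoi Y y \<subseteq> \<Omega> \<and> voronoi Y y \<inter> frontier \<Omega> = {}}. voronoi Y y)"
    using y(1) \<open>x \<in> voronoi Y y\<close> by blast
qed

lemma interior_energy_ge:
  fixes r :: real
  assumes "finite Y" "Y \<noteq> {}" "0 < \<rho>" "\<forall>x\<in>Qcube. infdist x Y \<le> \<rho>"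
    and "\<Omega> = cbox a (a + s *\<^sub>R One)" "\<Omega> \<subseteq> Qcube" "6 * \<rho> \<le> s" "0 \<le> r"
  shows "r\<^sup>2 * ((s - 6 * \<rho>) ^ 3 - card Y * (2 * r) ^ 3) \<le> interior_energy \<Omega> Y"
proof -
  define I where "I = {y \<in> Y. voronoi Y y \<subseteq> \<Omega> \<and> voronoi Y y \<inter> frontier \<Omega> = {}}"
  define W where "W = (\<Union>y\<in>I. voronoi Y y)"
  define A where "A = cbox (a + (3 * \<rho>) *\<^sub>R One) (a + (3 * \<rho>) *\<^sub>R One + (s - 6 * \<rho>) *\<^sub>R One)"
  have "A \<subseteq> W" unfolding A_def W_def I_def by (rule inner_cube_subset_interior_cells[OF assms(1-6)])
  have "W \<subseteq> Qcube" unfolding W_def using voronoi_subset_Qcube by blast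
  have "closed W" unfolding W_def using assms(1) closed_voronoi by (intro closed_UN) (auto simp: I_def)
  have "measure lebesgue A = (s - 6 * \<rho>) ^ 3"
    using measure_cube assms(7) unfolding A_def by simp
  then have "r\<^sup>2 * ((s - 6 * \<rho>) ^ 3 - card Y * (2 * r) ^ 3) \<le> integral A (\<lambda>x. (infdist x Y)\<^sup>2)"
    using integral_infdist_sq_ge[OF assms(1,2), of A r] \<open>A \<subseteq> W\<close> \<open>W \<subseteq> Qcube\<close> assms(8)
    by (auto simp: A_def)
  also have "\<dots> \<le> integral W (\<lambda>x. (infdist x Y)\<^sup>2)"
    using \<open>A \<subseteq> W\<close> \<open>W \<subseteq> Qcube\<close> \<open>closed W\<close>
    by (intro integral_subset_le integrable_on_subset_Qcube[OF continuous_on_infdist_sq]) (auto simp: A_def)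
  also have "\<dots> = interior_energy \<Omega> Y"
    unfolding interior_energy_def W_def I_def using assms(1) by (intro sum_cell_energy[symmetric]) auto
  finally show ?thesis .
qed

lemma minimizer_energy_bounds:
  assumes "is_minimizer n Y" "64 \<le> n" "\<Omega> = cbox a (a + s *\<^sub>R One)" "\<Omega> \<subseteq> Qcube"
    and "192 \<le> s * n powr (1/3)"
  shows "boundary_energy \<Omega> Y \<le> 24 ^ 4 * (1 / n)"
    and "s ^ 5 / 2 ^ 15 * n powr (-2/3) \<le> interior_energy \<Omega> Y"
    and "interior_energy \<Omega> Y \<le> 24\<^sup>2 * n powr (-2/3)"
proof -
  have fin: "finite Y" and card: "card Y = n" using assms(1) by (auto simp: is_minimizer_def)
  have "Y \<noteq> {}" using card assms(2) by auto
  define h where "h = real n powr (1/3)"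
  have "0 < h" using assms(2) by (simp add: h_def)
  have h3: "h ^ 3 = n" using assms(2) by (simp add: h_def powr_power)
  have h2: "n powr (-2/3) = 1 / h\<^sup>2" using assms(2) by (simp add: h_def powr_power powr_minus_divide)
  define \<rho> where "\<rho> = 24 / h"
  have "0 < \<rho>" using \<open>0 < h\<close> by (simp add: \<rho>_def)
  have covering: "\<forall>x\<in>Qcube. infdist x Y \<le> \<rho>"
    using minimizer_covering_radius[OF assms(1,2)] by (simp add: \<rho>_def h_def)
  have "8 * \<rho> \<le> s" using assms(5) \<open>0 < h\<close> by (simp add: \<rho>_def h_def field_simps)
  show "boundary_energy \<Omega> Y \<le> 24 ^ 4 * (1 / n)"
    using boundary_energy_le[OF fin _ covering] \<open>0 < \<rho>\<close> assms(3) h3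
    by (simp add: \<rho>_def power_divide)
  show "interior_energy \<Omega> Y \<le> 24\<^sup>2 * n powr (-2/3)"
    using interior_energy_le[OF fin covering] h2 by (simp add: \<rho>_def power_divide)
  \<comment> \<open>the cubes of side \<open>2r\<close> around the \<open>n\<close> points fill at most an eighth of the inner cube\<close>
  define r where "r = s / (16 * h)"
  have "0 \<le> s" "0 \<le> r" using \<open>8 * \<rho> \<le> s\<close> \<open>0 < \<rho>\<close> \<open>0 < h\<close> by (simp_all add: r_def)
  have "(s / 4) ^ 3 \<le> (s - 6 * \<rho>) ^ 3" using \<open>8 * \<rho> \<le> s\<close> \<open>0 < \<rho>\<close> by (intro power_mono) auto
  moreover have "real n * (2 * r) ^ 3 = s ^ 3 / 512"
    using \<open>0 < h\<close> by (simp add: r_def flip: h3) (simp add: field_simps eval_nat_numeral)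
  moreover have "0 \<le> s ^ 3" "(s / 4) ^ 3 = s ^ 3 / 64" using \<open>0 \<le> s\<close> by (simp_all add: power_divide)
  ultimately have "s ^ 3 / 128 \<le> (s - 6 * \<rho>) ^ 3 - card Y * (2 * r) ^ 3"
    unfolding card by linarith
  then have "r\<^sup>2 * (s ^ 3 / 128) \<le> r\<^sup>2 * ((s - 6 * \<rho>) ^ 3 - card Y * (2 * r) ^ 3)"
    by (rule mult_left_mono) simp
  also have "\<dots> \<le> interior_energy \<Omega> Y"
    using interior_energy_ge[OF fin \<open>Y \<noteq> {}\<close> \<open>0 < \<rho>\<close> covering assms(3,4) _ \<open>0 \<le> r\<close>] \<open>8 * \<rho> \<le> s\<close>
      \<open>0 < \<rho>\<close> by simp
  also have "r\<^sup>2 * (s ^ 3 / 128) = s ^ 5 / 2 ^ 15 * n powr (-2/3)"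
    unfolding h2 r_def using \<open>0 < h\<close> by (simp add: power_divide eval_nat_numeral)
  finally show "s ^ 5 / 2 ^ 15 * n powr (-2/3) \<le> interior_energy \<Omega> Y" .
qed

theorem proposition6p1:
  fixes Y :: "nat \<Rightarrow> pt set" and \<Omega> :: "pt set"
  assumes "\<And>n. is_minimizer n (Y n)"
    and "is_cube \<Omega>" and "\<Omega> \<subseteq> Qcube"
  shows "(\<lambda>n. boundary_energy \<Omega> (Y n)) \<in> O(\<lambda>n. 1 / real n) \<and>
         (\<lambda>n. interior_energy \<Omega> (Y n)) \<in> \<Theta>(\<lambda>n. real n powr (-2/3)) \<and>
         (\<lambda>n. boundary_energy \<Omega> (Y n)) \<in> o(\<lambda>n. interior_energy \<Omega> (Y n))"
proof -
  obtain a s where "0 < s" and \<Omega>: "\<Omega> = cbox a (a + s *\<^sub>R One)"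
    using assms(2) unfolding is_cube_def by blast
  have "filterlim (\<lambda>n::nat. s * real n powr (1/3)) at_top at_top"
    using \<open>0 < s\<close> by real_asymp
  then have "\<forall>\<^sub>F n in at_top. 64 \<le> n \<and> 192 \<le> s * real n powr (1/3)"
    by (simp add: filterlim_at_top eventually_conj eventually_ge_at_top)
  then have bounds: "\<forall>\<^sub>F n in at_top. boundary_energy \<Omega> (Y n) \<le> 24 ^ 4 * (1 / n) \<and>
      s ^ 5 / 2 ^ 15 * n powr (-2/3) \<le> interior_energy \<Omega> (Y n) \<and>
      interior_energy \<Omega> (Y n) \<le> 24\<^sup>2 * n powr (-2/3)"
    by eventually_elim (use minimizer_energy_bounds[OF assms(1) _ \<Omega> assms(3)] in blast)
  have nonneg: "0 \<le> boundary_energy \<Omega> (Y n)" "0 \<le> interior_energy \<Omega> (Y n)" for n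
    unfolding boundary_energy_def interior_energy_def by (intro sum_nonneg cell_energy_nonneg)+
  have big_O: "(\<lambda>n. boundary_energy \<Omega> (Y n)) \<in> O(\<lambda>n. 1 / real n)"
    using bounds nonneg by (intro bigoI[of _ "24 ^ 4"]) (auto elim!: eventually_mono)
  have big_Theta: "(\<lambda>n. interior_energy \<Omega> (Y n)) \<in> \<Theta>(\<lambda>n. real n powr (-2/3))"
    using bounds nonneg \<open>0 < s\<close>
    by (intro bigthetaI'[of "s ^ 5 / 2 ^ 15" "24\<^sup>2"]) (auto elim!: eventually_mono)
  have "(\<lambda>n. 1 / real n) \<in> o(\<lambda>n. real n powr (-2/3))" by real_asymp
  then have "(\<lambda>n. boundary_energy \<Omega> (Y n)) \<in> o(\<lambda>n. interior_energy \<Omega> (Y n))"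
    using big_O big_Theta
    by (meson bigthetaD2 bigomega_iff_bigo landau_o.big_small_trans landau_o.small_big_trans)
  then show ?thesis using big_O big_Theta by blast
qed

end
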